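(* Let $R$ and $S$ be commutative rings with identity, $f:R\to S$ a ring homomorphism, and $J$ a nonzero proper ideal of $S$. Let $\mathfrak{p}$ and $\{\mathfrak{p}_\alpha\}_{\alpha\in\Lambda}$ be prime ideals of $R$, and $\mathfrak{q}$ and $\{\mathfrak{q}_\alpha\}_{\alpha\in\Lambda}$ be prime ideals of $S$ not containing $J$. Then: (1) $\bigcap_{\alpha\in\Lambda}\mathfrak{p}_\alpha\subseteq\mathfrak{p}$ if and only if $\bigcap_{\alpha\in\Lambda}\mathfrak{p}_\alpha^{\prime_f}\subseteq\mathfrak{p}^{\prime_f}$. (2) $\bigcap_{\alpha\in\Lambda}\mathfrak{p}_\alpha\supseteq\mathfrak{p}$ if and only if $\bigcap_{\alpha\in\Lambda}\mathfrak{p}_\alpha^{\prime_f}\supseteq\mathfrak{p}^{\prime_f}$. (3) $\bigcap_{\alpha\in\Lambda}\mathfrak{q}_\alpha\subseteq\mathfrak{q}$ if and only if $\bigcap_{\alpha\in\Lambda}\overline{\mathfrak{q}_\alpha}^f\subseteq\overline{\mathfrak{q}}^f$. (4) If $\bigcap_{\alpha\in\Lambda}\mathfrak{q}_\alpha\supseteq\mathfrak{q}$, then $\bigcap_{\alpha\in\Lambda}\overline{\mathfrak{q}_\alpha}^f\supseteq\overline{\mathfrak{q}}^f$. The converse holds if either $f$ is surjective or $\operatorname{Spec}(S)\setminus V(J)$ is compactly packed. (5) $\bigcap_{\alpha\in\Lambda}\overline{\mathfrak{q}_\alpha}^f\subseteq\mathfrak{p}^{\prime_f}$ if and only if $f^{-1}\big(\bigcap_{\alpha\in\Lambda}\mathfrak{q}_\alpha+J\big)\subseteq\mathfrak{p}$.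 (6) $\bigcap_{\alpha\in\Lambda}\mathfrak{p}_\alpha^{\prime_f}\not\subseteq\overline{\mathfrak{q}}^f$.
   Context: $R\bowtie^f J:=\{(r,f(r)+j)\mid r\in R,\ j\in J\}$, a subring of $R\times S$. For a prime ideal $\mathfrak{p}$ of $R$, $\mathfrak{p}^{\prime_f}:=\{(p,f(p)+j)\mid p\in\mathfrak{p},\ j\in J\}$; for a prime ideal $\mathfrak{q}$ of $S$ with $J\not\subseteq\mathfrak{q}$, $\overline{\mathfrak{q}}^f:=\{(r,f(r)+j)\mid r\in R,\ j\in J,\ f(r)+j\in\mathfrak{q}\}$; both are prime ideals of $R\bowtie^f J$. $V(J)$ is the set of prime ideals of $S$ containing $J$. A subset $X\subseteq\operatorname{Spec}(S)$ is compactly packed if whenever an ideal $I$ of $S$ is contained in the union of a family $\{\mathfrak{q}_i\}_i$ of elements of $X$, then $I\subseteq\mathfrak{q}_i$ for some $i$. *)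

theory Defs
  imports "HOL-Algebra.Algebra"
begin

definition amalg :: "('a,'c) ring_scheme \<Rightarrow> ('b,'d) ring_scheme \<Rightarrow> ('a \<Rightarrow> 'b) \<Rightarrow> 'b set \<Rightarrow> ('a \<times> 'b) set" where
  "amalg R S f J = {(r, f r \<oplus>\<^bsub>S\<^esub> j) | r j. r \<in> carrier R \<and> j \<in> J}"

text \<open>p^{'_f} for an ideal p of R.\<close>
definition prime_ext :: "('a,'c) ring_scheme \<Rightarrow> ('b,'d) ring_scheme \<Rightarrow> ('a \<Rightarrow> 'b) \<Rightarrow> 'b set \<Rightarrow> 'a set \<Rightarrow> ('a \<times> 'b) set" where
  "prime_ext R S f J p = {(x, f x \<oplus>\<^bsub>S\<^esub> j) | x j. x \<in> p \<and> j \<in> J}"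

text \<open>overline{q}^f for an ideal q of S.\<close>
definition prime_bar :: "('a,'c) ring_scheme \<Rightarrow> ('b,'d) ring_scheme \<Rightarrow> ('a \<Rightarrow> 'b) \<Rightarrow> 'b set \<Rightarrow> 'b set \<Rightarrow> ('a \<times> 'b) set" where
  "prime_bar R S f J q = {(r, f r \<oplus>\<^bsub>S\<^esub> j) | r j. r \<in> carrier R \<and> j \<in> J \<and> f r \<oplus>\<^bsub>S\<^esub> j \<in> q}"

definition Spec :: "('b,'d) ring_scheme \<Rightarrow> 'b set set" where
  "Spec S = {q. primeideal q S}"

definition V :: "('b,'d) ring_scheme \<Rightarrow> 'b set \<Rightarrow> 'b set set" where
  "V S J = {q \<in> Spec S. J \<subseteq> q}"

definition compactly_packed :: "('b,'d) ring_scheme \<Rightarrow> 'b set set \<Rightarrow> bool" where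
  "compactly_packed S Y \<longleftrightarrow>
     (\<forall>I F. ideal I S \<longrightarrow> F \<subseteq> Y \<longrightarrow> I \<subseteq> Union F \<longrightarrow> (\<exists>q\<in>F. I \<subseteq> q))"

end

theory Submission
  imports Defs
begin

(* Inside the amalgamation both constructions commute with intersections:
   amalg \<inter> \<Inter> P\<^sub>\<alpha>'f = (\<Inter> P\<^sub>\<alpha>)'f and amalg \<inter> \<Inter> bar Q\<^sub>\<alpha> = bar (\<Inter> Q\<^sub>\<alpha>), so every item
   compares single ideals. The map p \<mapsto> p'f is an order embedding since J is nonempty.
   The map q \<mapsto> bar q reflects inclusion into a prime B not containing J: for s \<in> A pick
   j \<in> J - B; then (0, s j) \<in> bar A \<subseteq> bar B, so s j \<in> B and hence s \<in> B. For (5), some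
   (r, f r + j) lies in bar A iff f r \<in> A + J; for (6), the pair (0, j) with j \<in> J - q
   lies in every P\<^sub>\<alpha>'f but not in bar q. *)

lemma mem_amalg:
  "(a, b) \<in> amalg R S f J \<longleftrightarrow> (\<exists>j\<in>J. a \<in> carrier R \<and> b = f a \<oplus>\<^bsub>S\<^esub> j)"
  unfolding amalg_def by auto

lemma mem_prime_ext:
  "(a, b) \<in> prime_ext R S f J A \<longleftrightarrow> (\<exists>j\<in>J. a \<in> A \<and> b = f a \<oplus>\<^bsub>S\<^esub> j)"
  unfolding prime_ext_def by auto

lemma mem_prime_bar:
  "(a, b) \<in> prime_bar R S f J B \<longleftrightarrow>
     (\<exists>j\<in>J. a \<in> carrier R \<and> b = f a \<oplus>\<^bsub>S\<^esub> j \<and> b \<in> B)"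
  unfolding prime_bar_def by auto

lemma amalg_Int_INT_prime_ext:
  "amalg R S f J \<inter> (\<Inter>\<alpha>\<in>\<Lambda>. prime_ext R S f J (P \<alpha>)) =
     prime_ext R S f J (carrier R \<inter> (\<Inter>\<alpha>\<in>\<Lambda>. P \<alpha>))"
  by (auto simp: mem_amalg mem_prime_ext)

lemma prime_ext_subset_iff:
  assumes "J \<noteq> {}"
  shows "prime_ext R S f J A \<subseteq> prime_ext R S f J B \<longleftrightarrow> A \<subseteq> B"
proof
  assume ext: "prime_ext R S f J A \<subseteq> prime_ext R S f J B"
  obtain j where "j \<in> J" using assms by blast
  show "A \<subseteq> B"
  proof
    fix x assume "x \<in> A"
    with \<open>j \<in> J\<close> have "(x, f x \<oplus>\<^bsub>S\<^esub> j) \<in> prime_ext R S f J A"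
      by (auto simp: mem_prime_ext)
    with ext have "(x, f x \<oplus>\<^bsub>S\<^esub> j) \<in> prime_ext R S f J B" by blast
    then show "x \<in> B" by (simp add: mem_prime_ext)
  qed
qed (auto simp: prime_ext_def)

lemma prime_bar_subset_amalg: "prime_bar R S f J B \<subseteq> amalg R S f J"
  unfolding amalg_def prime_bar_def by blast

lemma (in ring) ideal_carrier_Int_INT:
  assumes "\<And>\<alpha>. \<alpha> \<in> \<Lambda> \<Longrightarrow> ideal (Q \<alpha>) R"
  shows "ideal (carrier R \<inter> (\<Inter>\<alpha>\<in>\<Lambda>. Q \<alpha>)) R"
proof (cases "\<Lambda> = {}")
  case True
  then show ?thesis by (simp add: oneideal)
next
  case False
  have "carrier R \<inter> (\<Inter>\<alpha>\<in>\<Lambda>. Q \<alpha>) = \<Inter>(Q ` \<Lambda>)"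
    using False assms ideal.axioms(1) additive_subgroup.a_subset by fastforce
  then show ?thesis
    using i_Intersect[of "Q ` \<Lambda>"] False assms by auto
qed

locale amalgamation = ring_hom_ring R S f + ideal J S for R S f J
begin

lemma amalg_Int_INT_prime_bar:
  "amalg R S f J \<inter> (\<Inter>\<alpha>\<in>\<Lambda>. prime_bar R S f J (Q \<alpha>)) =
     prime_bar R S f J (carrier S \<inter> (\<Inter>\<alpha>\<in>\<Lambda>. Q \<alpha>))"
  using a_subset by (auto simp: mem_amalg mem_prime_bar)

lemma mem_set_add_ideal_iff:
  assumes "s \<in> carrier S" and "A \<subseteq> carrier S"
  shows "s \<in> A <+>\<^bsub>S\<^esub> J \<longleftrightarrow> (\<exists>j\<in>J. s \<oplus>\<^bsub>S\<^esub> j \<in> A)"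
proof
  assume "s \<in> A <+>\<^bsub>S\<^esub> J"
  then obtain a j where "a \<in> A" "j \<in> J" "s = a \<oplus>\<^bsub>S\<^esub> j"
    unfolding set_add_def' by blast
  then have "s \<oplus>\<^bsub>S\<^esub> \<ominus>\<^bsub>S\<^esub> j = a" and "\<ominus>\<^bsub>S\<^esub> j \<in> J"
    using assms(2) a_subset by (auto simp: S.add.m_assoc S.r_neg)
  with \<open>a \<in> A\<close> show "\<exists>j\<in>J. s \<oplus>\<^bsub>S\<^esub> j \<in> A" by metis
next
  assume "\<exists>j\<in>J. s \<oplus>\<^bsub>S\<^esub> j \<in> A"
  then obtain j where "j \<in> J" "s \<oplus>\<^bsub>S\<^esub> j \<in> A" by blast
  moreover have "s = (s \<oplus>\<^bsub>S\<^esub> j) \<oplus>\<^bsub>S\<^esub> \<ominus>\<^bsub>S\<^esub> j"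
    using assms(1) \<open>j \<in> J\<close> a_subset by (auto simp: S.add.m_assoc S.r_neg)
  ultimately show "s \<in> A <+>\<^bsub>S\<^esub> J"
    unfolding set_add_def' by blast
qed

lemma prime_bar_subset_prime_ext_iff:
  assumes "A \<subseteq> carrier S"
  shows "prime_bar R S f J A \<subseteq> prime_ext R S f J p \<longleftrightarrow>
           {r \<in> carrier R. f r \<in> A <+>\<^bsub>S\<^esub> J} \<subseteq> p"
proof -
  have "prime_bar R S f J A \<subseteq> prime_ext R S f J p \<longleftrightarrow>
          (\<forall>r\<in>carrier R. \<forall>j\<in>J. f r \<oplus>\<^bsub>S\<^esub> j \<in> A \<longrightarrow> r \<in> p)"
  proof
    assume bar: "prime_bar R S f J A \<subseteq> prime_ext R S f J p"
    show "\<forall>r\<in>carrier R. \<forall>j\<in>J. f r \<oplus>\<^bsub>S\<^esub> j \<in> A \<longrightarrow> r \<in> p"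
    proof (intro ballI impI)
      fix r j assume "r \<in> carrier R" "j \<in> J" "f r \<oplus>\<^bsub>S\<^esub> j \<in> A"
      then have "(r, f r \<oplus>\<^bsub>S\<^esub> j) \<in> prime_bar R S f J A" by (auto simp: mem_prime_bar)
      with bar have "(r, f r \<oplus>\<^bsub>S\<^esub> j) \<in> prime_ext R S f J p" by blast
      then show "r \<in> p" by (simp add: mem_prime_ext)
    qed
  next
    assume H: "\<forall>r\<in>carrier R. \<forall>j\<in>J. f r \<oplus>\<^bsub>S\<^esub> j \<in> A \<longrightarrow> r \<in> p"
    show "prime_bar R S f J A \<subseteq> prime_ext R S f J p"
    proof
      fix x assume "x \<in> prime_bar R S f J A"
      then obtain r j where "x = (r, f r \<oplus>\<^bsub>S\<^esub> j)" "r \<in> carrier R" "j \<in> J" "f r \<oplus>\<^bsub>S\<^esub> j \<in> A"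
        unfolding prime_bar_def by blast
      with H show "x \<in> prime_ext R S f J p" by (auto simp: mem_prime_ext)
    qed
  qed
  also have "\<dots> \<longleftrightarrow> {r \<in> carrier R. f r \<in> A <+>\<^bsub>S\<^esub> J} \<subseteq> p"
    using mem_set_add_ideal_iff[OF hom_closed assms] by auto
  finally show ?thesis .
qed

lemma prime_bar_subset_iff:
  assumes A: "ideal A S" and B: "primeideal B S" and "\<not> J \<subseteq> B"
  shows "prime_bar R S f J A \<subseteq> prime_bar R S f J B \<longleftrightarrow> A \<subseteq> B"
proof
  assume bar: "prime_bar R S f J A \<subseteq> prime_bar R S f J B"
  obtain j where j: "j \<in> J" "j \<notin> B" using \<open>\<not> J \<subseteq> B\<close> by blast
  show "A \<subseteq> B"
  proof
    fix s assume "s \<in> A"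
    then have s: "s \<in> carrier S" using A ideal.axioms(1) additive_subgroup.a_subset by blast
    have "s \<otimes>\<^bsub>S\<^esub> j \<in> J" using s j I_l_closed by blast
    moreover have "s \<otimes>\<^bsub>S\<^esub> j \<in> A"
      using \<open>s \<in> A\<close> j a_subset ideal.I_r_closed[OF A] by blast
    ultimately have "(\<zero>\<^bsub>R\<^esub>, s \<otimes>\<^bsub>S\<^esub> j) \<in> prime_bar R S f J A"
      using s j a_subset by (auto simp: mem_prime_bar intro!: bexI[of _ "s \<otimes>\<^bsub>S\<^esub> j"])
    with bar have "(\<zero>\<^bsub>R\<^esub>, s \<otimes>\<^bsub>S\<^esub> j) \<in> prime_bar R S f J B" by blast
    then have "s \<otimes>\<^bsub>S\<^esub> j \<in> B" by (auto simp: mem_prime_bar)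
    then show "s \<in> B" using primeideal.I_prime[OF B] s j a_subset by blast
  qed
qed (auto simp: prime_bar_def)

lemma prime_bar_subset_INT_iff:
  assumes A: "ideal A S" and Q: "\<forall>\<alpha>\<in>\<Lambda>. primeideal (Q \<alpha>) S \<and> \<not> J \<subseteq> Q \<alpha>"
  shows "prime_bar R S f J A \<subseteq> amalg R S f J \<inter> (\<Inter>\<alpha>\<in>\<Lambda>. prime_bar R S f J (Q \<alpha>)) \<longleftrightarrow>
           A \<subseteq> carrier S \<inter> (\<Inter>\<alpha>\<in>\<Lambda>. Q \<alpha>)"
proof -
  have "prime_bar R S f J A \<subseteq> amalg R S f J \<inter> (\<Inter>\<alpha>\<in>\<Lambda>. prime_bar R S f J (Q \<alpha>)) \<longleftrightarrow>
          (\<forall>\<alpha>\<in>\<Lambda>. prime_bar R S f J A \<subseteq> prime_bar R S f J (Q \<alpha>))"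
    using prime_bar_subset_amalg[of R S f J A] by blast
  also have "\<dots> \<longleftrightarrow> (\<forall>\<alpha>\<in>\<Lambda>. A \<subseteq> Q \<alpha>)"
    using prime_bar_subset_iff[OF A] Q by simp
  also have "\<dots> \<longleftrightarrow> A \<subseteq> carrier S \<inter> (\<Inter>\<alpha>\<in>\<Lambda>. Q \<alpha>)"
    using ideal.axioms(1)[OF A, THEN additive_subgroup.a_subset] by blast
  finally show ?thesis .
qed

lemma prime_ext_not_subset_prime_bar:
  assumes "\<zero>\<^bsub>R\<^esub> \<in> A" and "\<not> J \<subseteq> B"
  shows "\<not> prime_ext R S f J A \<subseteq> prime_bar R S f J B"
proof
  assume ext: "prime_ext R S f J A \<subseteq> prime_bar R S f J B"
  obtain j where j: "j \<in> J" "j \<notin> B" using \<open>\<not> J \<subseteq> B\<close> by blast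
  then have "(\<zero>\<^bsub>R\<^esub>, j) \<in> prime_ext R S f J A"
    using assms(1) a_subset by (auto simp: mem_prime_ext intro!: bexI[of _ j])
  with ext j show False by (auto simp: mem_prime_bar)
qed

end

theorem lemma2p3:
  fixes R :: "('a,'c) ring_scheme" and S :: "('b,'d) ring_scheme"
    and f :: "'a \<Rightarrow> 'b" and J :: "'b set"
    and p :: "'a set" and P :: "'i \<Rightarrow> 'a set"
    and q :: "'b set" and Q :: "'i \<Rightarrow> 'b set" and \<Lambda> :: "'i set"
  assumes "cring R" and "cring S" and "f \<in> ring_hom R S"
    and "ideal J S" and "J \<noteq> {\<zero>\<^bsub>S\<^esub>}" and "J \<noteq> carrier S"
    and "primeideal p R" and "\<forall>\<alpha>\<in>\<Lambda>. primeideal (P \<alpha>) R"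
    and "primeideal q S" and "\<not> J \<subseteq> q"
    and "\<forall>\<alpha>\<in>\<Lambda>. primeideal (Q \<alpha>) S \<and> \<not> J \<subseteq> Q \<alpha>"
  shows
    "(carrier R \<inter> (\<Inter>\<alpha>\<in>\<Lambda>. P \<alpha>) \<subseteq> p \<longleftrightarrow>
        amalg R S f J \<inter> (\<Inter>\<alpha>\<in>\<Lambda>. prime_ext R S f J (P \<alpha>)) \<subseteq> prime_ext R S f J p)
   \<and> (p \<subseteq> carrier R \<inter> (\<Inter>\<alpha>\<in>\<Lambda>. P \<alpha>) \<longleftrightarrow>
        prime_ext R S f J p \<subseteq> amalg R S f J \<inter> (\<Inter>\<alpha>\<in>\<Lambda>. prime_ext R S f J (P \<alpha>)))
   \<and> (carrier S \<inter> (\<Inter>\<alpha>\<in>\<Lambda>. Q \<alpha>) \<subseteq> q \<longleftrightarrow>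
        amalg R S f J \<inter> (\<Inter>\<alpha>\<in>\<Lambda>. prime_bar R S f J (Q \<alpha>)) \<subseteq> prime_bar R S f J q)
   \<and> (q \<subseteq> carrier S \<inter> (\<Inter>\<alpha>\<in>\<Lambda>. Q \<alpha>) \<longrightarrow>
        prime_bar R S f J q \<subseteq> amalg R S f J \<inter> (\<Inter>\<alpha>\<in>\<Lambda>. prime_bar R S f J (Q \<alpha>)))
   \<and> ((f ` carrier R = carrier S \<or> compactly_packed S (Spec S - V S J)) \<longrightarrow>
        (prime_bar R S f J q \<subseteq> amalg R S f J \<inter> (\<Inter>\<alpha>\<in>\<Lambda>. prime_bar R S f J (Q \<alpha>)) \<longrightarrow>
         q \<subseteq> carrier S \<inter> (\<Inter>\<alpha>\<in>\<Lambda>. Q \<alpha>)))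
   \<and> (amalg R S f J \<inter> (\<Inter>\<alpha>\<in>\<Lambda>. prime_bar R S f J (Q \<alpha>)) \<subseteq> prime_ext R S f J p \<longleftrightarrow>
        {r \<in> carrier R. f r \<in> (carrier S \<inter> (\<Inter>\<alpha>\<in>\<Lambda>. Q \<alpha>)) <+>\<^bsub>S\<^esub> J} \<subseteq> p)
   \<and> \<not> (amalg R S f J \<inter> (\<Inter>\<alpha>\<in>\<Lambda>. prime_ext R S f J (P \<alpha>)) \<subseteq> prime_bar R S f J q)"
proof -
  interpret amalgamation R S f J
    using assms(1-4) by (simp add: amalgamation_def ring_hom_ringI2 cring.axioms(1))
  have Q_Int: "ideal (carrier S \<inter> (\<Inter>\<alpha>\<in>\<Lambda>. Q \<alpha>)) S"
    using assms(11) by (intro S.ideal_carrier_Int_INT) (simp add: primeideal_def)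
  have q: "ideal q S" using assms(9) by (simp add: primeideal_def)
  have "J \<noteq> {}" using zero_closed by blast
  have zero_in_P_Int: "\<zero>\<^bsub>R\<^esub> \<in> carrier R \<inter> (\<Inter>\<alpha>\<in>\<Lambda>. P \<alpha>)"
    using assms(8) by (auto simp: primeideal_def ideal_def additive_subgroup.zero_closed)
  show ?thesis
    unfolding amalg_Int_INT_prime_ext amalg_Int_INT_prime_bar
    by (simp add: prime_ext_subset_iff[OF \<open>J \<noteq> {}\<close>] prime_bar_subset_iff[OF Q_Int assms(9,10)]
        prime_bar_subset_INT_iff[OF q assms(11), unfolded amalg_Int_INT_prime_bar]
        prime_bar_subset_prime_ext_iff[OF Int_lower1]
        prime_ext_not_subset_prime_bar[OF zero_in_P_Int assms(10)])
qed

end
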